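(* Let $x\in\mathbb{R}^n$ and let $m(y)=c+g^T(y-x)+\tfrac12(y-x)^TH(y-x)$ with $c\in\mathbb{R}$, $g\in\mathbb{R}^n$, $H\in\mathbb{R}^{n\times n}$ symmetric. Let $\Delta>0$. (a) Suppose $f:\mathbb{R}^n\to\mathbb{R}$ is bounded below and continuously differentiable with $\nabla f$ Lipschitz with constant $L_{\nabla f}$, and there is $\kappa>0$ with $|m(y)-f(x)-\nabla f(x)^T(y-x)|\le\kappa\Delta^2$ for all $y\in B(x,\Delta)$. Then for every $\kappa_H\ge\|H\|$, for all $y\in B(x,\Delta)$: $|m(y)-f(y)|\le\kappa_{\mathrm{mf}}\Delta^2$ and $\|\nabla m(y)-\nabla f(y)\|\le\kappa_{\mathrm{mg}}\Delta$, where $\kappa_{\mathrm{mf}}=\kappa+\frac{L_{\nabla f}}{2}$ and $\kappa_{\mathrm{mg}}=2\kappa+L_{\nabla f}+2\kappa_H$. (b) Suppose $f:\mathbb{R}^n\to\mathbb{R}$ is bounded below and twice continuously differentiable with $\nabla^2 f$ Lipschitz with constant $L_{\nabla^2 f}$, and there is $\kappa>0$ with $\left|m(y)-f(x)-\nabla f(x)^T(y-x)-\tfrac12(y-x)^T\nabla^2 f(x)(y-x)\right|\le\kappa\Delta^3$ for all $y\in B(x,\Delta)$. Then for all $y\in B(x,\Delta)$: $|m(y)-f(y)|\le\kappa_{\mathrm{mf}}\Delta^3$, $\|\nabla m(y)-\nabla f(y)\|\le\kappa_{\mathrm{mg}}\Delta^2$, $\|\nabla^2 m(y)-\nabla^2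 f(y)\|\le\kappa_{\mathrm{mh}}\Delta$, with $\kappa_{\mathrm{mf}}=\kappa+\frac{L_{\nabla^2 f}}{6}$, $\kappa_{\mathrm{mg}}=34\kappa+\frac{L_{\nabla^2 f}}{2}$, $\kappa_{\mathrm{mh}}=24\kappa+L_{\nabla^2 f}$.
   Context: Norms are Euclidean (operator 2-norm for matrices); $B(x,\Delta)=\{y:\|y-x\|\le\Delta\}$. *)

theory Defs
  imports "HOL-Analysis.Analysis"
begin

text \<open>Operator 2-norm of a square matrix (the library norm on real^'n^'n is Frobenius).\<close>
definition mat_opnorm :: "real^'n^'n \<Rightarrow> real" where
  "mat_opnorm A = onorm (\<lambda>v. A *v v)"

definition qmodel :: "real \<Rightarrow> real^'n \<Rightarrow> real^'n^'n \<Rightarrow> real^'n \<Rightarrow> real^'n \<Rightarrow> real" where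
  "qmodel c g H x y = c + g \<bullet> (y - x) + (1/2) * ((y - x) \<bullet> (H *v (y - x)))"

text \<open>Gradient of the model (valid for symmetric H): g + H(y-x); its Hessian is H.\<close>
definition qmodel_grad :: "real^'n \<Rightarrow> real^'n^'n \<Rightarrow> real^'n \<Rightarrow> real^'n \<Rightarrow> real^'n" where
  "qmodel_grad g H x y = g + H *v (y - x)"

end

theory Submission
  imports Defs
begin

text \<open>Let \<open>e(w)\<close> be the difference between the model at \<open>x + w\<close> and the Taylor
  polynomial of \<open>f\<close> at \<open>x\<close> of the model's order, so that \<open>\<bar>e\<bar> \<le> K\<close> on the ball of radius
  \<open>\<Delta>\<close>. As \<open>e\<close> is a quadratic polynomial, \<open>e(w) - e(-w)\<close> isolates its linear part and
  \<open>e(w) + e(-w) - 2 e(0)\<close> its quadratic part: hence \<open>\<parallel>g - \<nabla>f(x)\<parallel> \<le> K/\<Delta>\<close> and, by polarization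
  of the symmetric matrix \<open>H - \<nabla>\<^sup>2f(x)\<close>, \<open>\<parallel>H - \<nabla>\<^sup>2f(x)\<parallel> \<le> 4K/\<Delta>\<^sup>2\<close>. At a point \<open>y\<close> of the
  ball these are combined with Taylor's theorem for a function with Lipschitz derivative
  (remainders \<open>L\<parallel>d\<parallel>\<^sup>2/2\<close> and \<open>L\<parallel>d\<parallel>\<^sup>3/6\<close>), proved by comparing derivatives along the segment.
  Symmetry of \<open>\<nabla>\<^sup>2f(x)\<close> is not assumed; it follows from the Lipschitz Hessian through the mixed
  second difference. The argument gives the constants \<open>5\<kappa>\<close> and \<open>4\<kappa>\<close> in place of the stated
  \<open>34\<kappa>\<close> and \<open>24\<kappa>\<close>.\<close>

section \<open>Taylor bounds with a Lipschitz derivative\<close>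

lemma abs_diff_le_of_DERIV_majorant:
  fixes \<rho> \<beta> \<rho>' \<beta>' :: "real \<Rightarrow> real"
  assumes "a \<le> b"
    and \<rho>: "\<And>t. a \<le> t \<Longrightarrow> t \<le> b \<Longrightarrow> (\<rho> has_real_derivative \<rho>' t) (at t)"
    and \<beta>: "\<And>t. a \<le> t \<Longrightarrow> t \<le> b \<Longrightarrow> (\<beta> has_real_derivative \<beta>' t) (at t)"
    and majorant: "\<And>t. a \<le> t \<Longrightarrow> t \<le> b \<Longrightarrow> \<bar>\<rho>' t\<bar> \<le> \<beta>' t"
  shows "\<bar>\<rho> b - \<rho> a\<bar> \<le> \<beta> b - \<beta> a"
proof -
  have "(\<lambda>t. \<beta> t - \<rho> t) a \<le> (\<lambda>t. \<beta> t - \<rho> t) b"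
  proof (rule DERIV_nonneg_imp_nondecreasing[OF \<open>a \<le> b\<close>])
    fix t assume "a \<le> t" "t \<le> b"
    then show "\<exists>y. ((\<lambda>t. \<beta> t - \<rho> t) has_real_derivative y) (at t) \<and> 0 \<le> y"
      using \<rho> \<beta> majorant by (force intro: DERIV_diff)
  qed
  moreover have "(\<lambda>t. \<beta> t + \<rho> t) a \<le> (\<lambda>t. \<beta> t + \<rho> t) b"
  proof (rule DERIV_nonneg_imp_nondecreasing[OF \<open>a \<le> b\<close>])
    fix t assume "a \<le> t" "t \<le> b"
    then show "\<exists>y. ((\<lambda>t. \<beta> t + \<rho> t) has_real_derivative y) (at t) \<and> 0 \<le> y"
      using \<rho> \<beta> majorant by (force intro: DERIV_add)
  qed
  ultimately show ?thesis by auto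
qed

lemma has_real_derivative_along_line:
  fixes f :: "'a::real_normed_vector \<Rightarrow> real"
  assumes "(f has_derivative f') (at (x + t *\<^sub>R d))"
  shows "((\<lambda>s. f (x + s *\<^sub>R d)) has_real_derivative f' d) (at t)"
proof -
  have "((\<lambda>s. x + s *\<^sub>R d) has_derivative (\<lambda>h. h *\<^sub>R d)) (at t)"
    by (auto intro!: derivative_eq_intros)
  from has_derivative_compose[OF this assms]
  have "((\<lambda>s. f (x + s *\<^sub>R d)) has_derivative (\<lambda>h. f' (h *\<^sub>R d))) (at t)"
    by (simp add: o_def)
  moreover have "(\<lambda>h. f' (h *\<^sub>R d)) = (*) (f' d)"
    using linear_cmul[OF has_derivative_linear[OF assms]] by (auto simp: mult.commute)
  ultimately show ?thesis by (simp add: has_field_derivative_def)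
qed

lemma has_real_derivative_inner_along_line:
  fixes F :: "'a::real_normed_vector \<Rightarrow> 'b::real_inner"
  assumes "(F has_derivative F') (at (x + t *\<^sub>R d))"
  shows "((\<lambda>s. F (x + s *\<^sub>R d) \<bullet> u) has_real_derivative F' d \<bullet> u) (at t)"
  using has_real_derivative_along_line[OF
      bounded_linear.has_derivative[OF bounded_linear_inner_left assms]] .

lemma norm_derivative_diff_le:
  assumes F': "\<And>y. (F has_derivative F' y) (at y)"
    and lip: "\<And>y z. onorm (\<lambda>h. F' y h - F' z h) \<le> L * norm (y - z)"
  shows "norm (F' y h - F' z h) \<le> L * norm (y - z) * norm h"
proof -
  have "bounded_linear (\<lambda>h. F' y h - F' z h)"
    using F' by (intro bounded_linear_sub has_derivative_bounded_linear)
  from onorm[OF this, of h]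
  have "norm (F' y h - F' z h) \<le> onorm (\<lambda>h. F' y h - F' z h) * norm h"
    by simp
  also have "\<dots> \<le> L * norm (y - z) * norm h"
    using lip by (intro mult_right_mono) auto
  finally show ?thesis .
qed

text \<open>The remainder is tested against its own direction, which reduces the estimate to the
  scalar function \<open>t \<mapsto> F (x + t d) \<bullet> e\<close>.\<close>

lemma taylor_remainder_le_lipschitz_derivative:
  fixes F :: "'a::real_normed_vector \<Rightarrow> 'b::real_inner"
  assumes F': "\<And>y. (F has_derivative F' y) (at y)"
    and lip: "\<And>y z. onorm (\<lambda>h. F' y h - F' z h) \<le> L * norm (y - z)"
    and "0 \<le> L"
  shows "norm (F (x + d) - F x - F' x d) \<le> L / 2 * norm d ^ 2"
proof -
  define e where "e = F (x + d) - F x - F' x d"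
  define \<rho> where "\<rho> t = F (x + t *\<^sub>R d) \<bullet> e - t * (F' x d \<bullet> e)" for t
  define \<beta> where "\<beta> t = L * norm d ^ 2 * norm e * t ^ 2 / 2" for t
  have "\<bar>\<rho> 1 - \<rho> 0\<bar> \<le> \<beta> 1 - \<beta> 0"
  proof (rule abs_diff_le_of_DERIV_majorant[where \<rho>'="\<lambda>t. F' (x + t *\<^sub>R d) d \<bullet> e - F' x d \<bullet> e"
        and \<beta>'="\<lambda>t. L * norm d ^ 2 * norm e * t"])
    fix t :: real assume t: "0 \<le> t" "t \<le> 1"
    show "(\<rho> has_real_derivative F' (x + t *\<^sub>R d) d \<bullet> e - F' x d \<bullet> e) (at t)"
      unfolding \<rho>_def
      by (rule DERIV_diff[OF has_real_derivative_inner_along_line[OF F'[of "x + t *\<^sub>R d"]]])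
        (rule derivative_eq_intros | simp)+
    show "(\<beta> has_real_derivative L * norm d ^ 2 * norm e * t) (at t)"
      unfolding \<beta>_def by (rule derivative_eq_intros | simp)+
    have "norm (F' (x + t *\<^sub>R d) d - F' x d) \<le> L * norm (t *\<^sub>R d) * norm d"
      using norm_derivative_diff_le[OF F' lip, where y="x + t *\<^sub>R d" and z=x and h=d] by simp
    then have "\<bar>(F' (x + t *\<^sub>R d) d - F' x d) \<bullet> e\<bar> \<le> L * norm (t *\<^sub>R d) * norm d * norm e"
      by (intro order_trans[OF Cauchy_Schwarz_ineq2] mult_right_mono) simp_all
    then show "\<bar>F' (x + t *\<^sub>R d) d \<bullet> e - F' x d \<bullet> e\<bar> \<le> L * norm d ^ 2 * norm e * t"
      using t by (simp add: inner_diff_left power2_eq_square mult_ac)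
  qed simp
  moreover have "\<rho> 1 - \<rho> 0 = norm e ^ 2"
    by (simp add: \<rho>_def e_def inner_diff_left power2_norm_eq_inner)
  ultimately have "norm e * norm e \<le> norm e * (L / 2 * norm d ^ 2)"
    by (simp add: \<beta>_def power2_eq_square mult_ac)
  then show ?thesis
    using \<open>0 \<le> L\<close> by (cases "e = 0") (auto simp: e_def)
qed

lemma taylor2_remainder_le_lipschitz_hessian:
  fixes f :: "'a::real_inner \<Rightarrow> real"
  assumes f': "\<And>y. (f has_derivative (\<lambda>h. gradf y \<bullet> h)) (at y)"
    and gradf': "\<And>y. (gradf has_derivative G y) (at y)"
    and lip: "\<And>y z. onorm (\<lambda>h. G y h - G z h) \<le> L * norm (y - z)"
    and "0 \<le> L"
  shows "\<bar>f (x + d) - f x - gradf x \<bullet> d - 1/2 * (d \<bullet> G x d)\<bar> \<le> L / 6 * norm d ^ 3"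
proof -
  define \<rho> where "\<rho> t = f (x + t *\<^sub>R d) - t * (gradf x \<bullet> d) - t\<^sup>2 / 2 * (d \<bullet> G x d)" for t
  define \<beta> where "\<beta> t = L * norm d ^ 3 * t ^ 3 / 6" for t
  have "\<bar>\<rho> 1 - \<rho> 0\<bar> \<le> \<beta> 1 - \<beta> 0"
  proof (rule abs_diff_le_of_DERIV_majorant[where
        \<rho>'="\<lambda>t. gradf (x + t *\<^sub>R d) \<bullet> d - gradf x \<bullet> d - t * (d \<bullet> G x d)"
        and \<beta>'="\<lambda>t. L * norm d ^ 3 * t\<^sup>2 / 2"])
    fix t :: real assume t: "0 \<le> t" "t \<le> 1"
    show "(\<rho> has_real_derivative gradf (x + t *\<^sub>R d) \<bullet> d - gradf x \<bullet> d - t * (d \<bullet> G x d)) (at t)"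
      unfolding \<rho>_def
      by (rule DERIV_diff[OF DERIV_diff[OF has_real_derivative_along_line[OF f'[of "x + t *\<^sub>R d"]]]])
        (rule derivative_eq_intros | simp)+
    show "(\<beta> has_real_derivative L * norm d ^ 3 * t\<^sup>2 / 2) (at t)"
      unfolding \<beta>_def by (rule derivative_eq_intros | simp)+
    have "G x (t *\<^sub>R d) = t *\<^sub>R G x d"
      using linear_cmul[OF has_derivative_linear[OF gradf']] .
    then have "gradf (x + t *\<^sub>R d) \<bullet> d - gradf x \<bullet> d - t * (d \<bullet> G x d)
        = (gradf (x + t *\<^sub>R d) - gradf x - G x (t *\<^sub>R d)) \<bullet> d"
      by (simp add: inner_diff_left inner_diff_right inner_commute)
    also have "\<bar>\<dots>\<bar> \<le> norm (gradf (x + t *\<^sub>R d) - gradf x - G x (t *\<^sub>R d)) * norm d"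
      by (rule Cauchy_Schwarz_ineq2)
    also have "\<dots> \<le> L / 2 * norm (t *\<^sub>R d) ^ 2 * norm d"
      by (intro mult_right_mono taylor_remainder_le_lipschitz_derivative[OF gradf' lip \<open>0 \<le> L\<close>]) auto
    also have "\<dots> = L * norm d ^ 3 * t\<^sup>2 / 2"
      using t by (simp add: power2_eq_square power3_eq_cube)
    finally show "\<bar>gradf (x + t *\<^sub>R d) \<bullet> d - gradf x \<bullet> d - t * (d \<bullet> G x d)\<bar> \<le> L * norm d ^ 3 * t\<^sup>2 / 2" .
  qed simp
  then show ?thesis by (simp add: \<rho>_def \<beta>_def algebra_simps)
qed

lemma mixed_difference_le_lipschitz_hessian:
  fixes f :: "'a::real_inner \<Rightarrow> real"
  assumes f': "\<And>y. (f has_derivative (\<lambda>h. gradf y \<bullet> h)) (at y)"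
    and gradf': "\<And>y. (gradf has_derivative G y) (at y)"
    and lip: "\<And>y z. onorm (\<lambda>h. G y h - G z h) \<le> L * norm (y - z)"
    and "0 \<le> L"
  shows "\<bar>f (x + u + v) - f (x + u) - f (x + v) + f x - u \<bullet> G x v\<bar>
           \<le> L * (norm v ^ 2 / 2 + norm u * norm v) * norm u"
proof -
  define E where "E = L * (norm v ^ 2 / 2 + norm u * norm v) * norm u"
  define \<rho> where "\<rho> s = f (x + v + s *\<^sub>R u) - f (x + s *\<^sub>R u) - s * (u \<bullet> G x v)" for s
  have "\<bar>\<rho> 1 - \<rho> 0\<bar> \<le> E * 1 - E * 0"
  proof (rule abs_diff_le_of_DERIV_majorant[where
        \<rho>'="\<lambda>s. gradf (x + v + s *\<^sub>R u) \<bullet> u - gradf (x + s *\<^sub>R u) \<bullet> u - u \<bullet> G x v"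
        and \<beta>'="\<lambda>s. E"])
    fix s :: real assume s: "0 \<le> s" "s \<le> 1"
    show "(\<rho> has_real_derivative
        gradf (x + v + s *\<^sub>R u) \<bullet> u - gradf (x + s *\<^sub>R u) \<bullet> u - u \<bullet> G x v) (at s)"
      unfolding \<rho>_def
      by (rule DERIV_diff[OF DERIV_diff[OF has_real_derivative_along_line[OF f'[of "x + v + s *\<^sub>R u"]]
            has_real_derivative_along_line[OF f'[of "x + s *\<^sub>R u"]]]])
        (rule derivative_eq_intros | simp)+
    show "((\<lambda>s. E * s) has_real_derivative E) (at s)"
      by (rule derivative_eq_intros | simp)+
    define p where "p = x + s *\<^sub>R u"
    have "norm (gradf (p + v) - gradf p - G x v)
        \<le> norm (gradf (p + v) - gradf p - G p v) + norm (G p v - G x v)"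
      by (rule order_trans[OF _ norm_triangle_ineq]) simp
    also have "\<dots> \<le> L / 2 * norm v ^ 2 + L * norm (p - x) * norm v"
      by (intro add_mono taylor_remainder_le_lipschitz_derivative[OF gradf' lip \<open>0 \<le> L\<close>]
          norm_derivative_diff_le[OF gradf' lip])
    also have "\<dots> \<le> L / 2 * norm v ^ 2 + L * norm u * norm v"
    proof -
      have "norm (p - x) \<le> norm u"
        using s by (simp add: p_def mult_left_le_one_le)
      then show ?thesis
        using \<open>0 \<le> L\<close> by (simp add: mult_right_mono mult_left_mono)
    qed
    finally have "norm (gradf (p + v) - gradf p - G x v) * norm u
        \<le> (L / 2 * norm v ^ 2 + L * norm u * norm v) * norm u"
      by (rule mult_right_mono) simp
    then have "\<bar>(gradf (p + v) - gradf p - G x v) \<bullet> u\<bar> \<le> E"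
      using Cauchy_Schwarz_ineq2[of "gradf (p + v) - gradf p - G x v" u]
      by (simp add: E_def algebra_simps)
    then show "\<bar>gradf (x + v + s *\<^sub>R u) \<bullet> u - gradf (x + s *\<^sub>R u) \<bullet> u - u \<bullet> G x v\<bar> \<le> E"
      by (simp add: p_def inner_diff_left inner_diff_right inner_commute add_ac)
  qed simp
  then show ?thesis by (simp add: \<rho>_def E_def algebra_simps)
qed

text \<open>Both mixed differences of \<open>f\<close> are the same number, so their second-order parts
  \<open>u \<bullet> G x v\<close> and \<open>v \<bullet> G x u\<close> agree up to \<open>O(\<epsilon>\<^sup>3)\<close> after scaling \<open>u, v\<close> by \<open>\<epsilon>\<close>,
  while they scale like \<open>\<epsilon>\<^sup>2\<close>.\<close>

lemma second_derivative_symmetric: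
  fixes f :: "'a::real_inner \<Rightarrow> real"
  assumes f': "\<And>y. (f has_derivative (\<lambda>h. gradf y \<bullet> h)) (at y)"
    and gradf': "\<And>y. (gradf has_derivative G y) (at y)"
    and lip: "\<And>y z. onorm (\<lambda>h. G y h - G z h) \<le> L * norm (y - z)"
    and "0 \<le> L"
  shows "u \<bullet> G x v = v \<bullet> G x u"
proof -
  define D where "D = \<bar>u \<bullet> G x v - v \<bullet> G x u\<bar>"
  define C where "C = L * (norm v ^ 2 / 2 + norm u * norm v) * norm u
                    + L * (norm u ^ 2 / 2 + norm v * norm u) * norm v"
  have "0 \<le> C"
    using \<open>0 \<le> L\<close> by (simp add: C_def)
  have D_le: "D \<le> \<epsilon> * C" if "0 < \<epsilon>" for \<epsilon>
  proof -
    have G_scale: "G x (\<epsilon> *\<^sub>R w) = \<epsilon> *\<^sub>R G x w" for w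
      using linear_cmul[OF has_derivative_linear[OF gradf']] .
    have swap: "x + \<epsilon> *\<^sub>R v + \<epsilon> *\<^sub>R u = x + \<epsilon> *\<^sub>R u + \<epsilon> *\<^sub>R v"
      by (simp add: add_ac)
    have "\<epsilon>\<^sup>2 * D = \<bar>\<epsilon>\<^sup>2 * (u \<bullet> G x v - v \<bullet> G x u)\<bar>"
      by (simp add: D_def abs_mult)
    also have "\<dots> = \<bar>(\<epsilon> *\<^sub>R u) \<bullet> G x (\<epsilon> *\<^sub>R v) - (\<epsilon> *\<^sub>R v) \<bullet> G x (\<epsilon> *\<^sub>R u)\<bar>"
      by (simp add: G_scale power2_eq_square algebra_simps)
    also have "\<dots> \<le> L * (norm (\<epsilon> *\<^sub>R v) ^ 2 / 2 + norm (\<epsilon> *\<^sub>R u) * norm (\<epsilon> *\<^sub>R v)) * norm (\<epsilon> *\<^sub>R u)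
        + L * (norm (\<epsilon> *\<^sub>R u) ^ 2 / 2 + norm (\<epsilon> *\<^sub>R v) * norm (\<epsilon> *\<^sub>R u)) * norm (\<epsilon> *\<^sub>R v)"
      using mixed_difference_le_lipschitz_hessian[OF f' gradf' lip \<open>0 \<le> L\<close>, of x "\<epsilon> *\<^sub>R u" "\<epsilon> *\<^sub>R v"]
        mixed_difference_le_lipschitz_hessian[OF f' gradf' lip \<open>0 \<le> L\<close>, of x "\<epsilon> *\<^sub>R v" "\<epsilon> *\<^sub>R u"]
      unfolding swap by linarith
    also have "\<dots> = \<epsilon>\<^sup>2 * (\<epsilon> * C)"
      using \<open>0 < \<epsilon>\<close> by (simp add: C_def power2_eq_square algebra_simps)
    finally show ?thesis
      using \<open>0 < \<epsilon>\<close> by simp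
  qed
  have "D \<le> 0"
  proof (rule field_le_epsilon)
    fix \<epsilon> :: real assume "0 < \<epsilon>"
    then have "D \<le> \<epsilon> / (C + 1) * C"
      using D_le[of "\<epsilon> / (C + 1)"] \<open>0 \<le> C\<close> by simp
    also have "\<dots> \<le> 0 + \<epsilon>"
      using \<open>0 < \<epsilon>\<close> \<open>0 \<le> C\<close> by (simp add: field_simps)
    finally show "D \<le> 0 + \<epsilon>" .
  qed
  then show ?thesis
    by (simp add: D_def)
qed

section \<open>Polynomials bounded on a ball\<close>

lemma norm_linear_part_le_of_ball_bound:
  fixes b :: "'a::real_inner"
  assumes "0 < \<Delta>"
    and fit: "\<And>w. norm w \<le> \<Delta> \<Longrightarrow> \<bar>a + b \<bullet> w + q w\<bar> \<le> K"
    and even: "\<And>w. q (- w) = q w"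
  shows "\<Delta> * norm b \<le> K"
proof (cases "b = 0")
  case True
  then show ?thesis
    using fit[of 0] \<open>0 < \<Delta>\<close> by auto
next
  case False
  define w where "w = (\<Delta> / norm b) *\<^sub>R b"
  have "norm w = \<Delta>" and "b \<bullet> w = \<Delta> * norm b"
    using False \<open>0 < \<Delta>\<close> by (simp_all add: w_def power2_norm_eq_inner[symmetric] power2_eq_square)
  then show ?thesis
    using fit[of w] fit[of "- w"] even[of w] by (simp add: abs_le_iff)
qed

lemma quadratic_part_le_of_ball_bound:
  fixes A :: "'a::real_inner \<Rightarrow> 'a"
  assumes "linear A" and "0 < \<Delta>"
    and fit: "\<And>w. norm w \<le> \<Delta> \<Longrightarrow> \<bar>a + b \<bullet> w + 1/2 * (w \<bullet> A w)\<bar> \<le> K"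
  shows "\<bar>v \<bullet> A v\<bar> \<le> 4 * K / \<Delta>\<^sup>2 * norm v ^ 2"
proof (cases "v = 0")
  case True
  then show ?thesis
    using linear_0[OF \<open>linear A\<close>] by simp
next
  case False
  define w where "w = (\<Delta> / norm v) *\<^sub>R v"
  have "norm w = \<Delta>"
    using False \<open>0 < \<Delta>\<close> by (simp add: w_def)
  then have "\<bar>w \<bullet> A w\<bar> \<le> 4 * K"
    using fit[of w] fit[of "- w"] fit[of 0] \<open>0 < \<Delta>\<close> linear_neg[OF \<open>linear A\<close>, of w]
    by (simp add: abs_le_iff)
  moreover have "w \<bullet> A w = (\<Delta> / norm v)\<^sup>2 * (v \<bullet> A v)"
    by (simp add: w_def linear_cmul[OF \<open>linear A\<close>] power2_eq_square)
  ultimately have "(\<Delta> / norm v)\<^sup>2 * \<bar>v \<bullet> A v\<bar> \<le> 4 * K"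
    by (simp add: abs_mult)
  then show ?thesis
    using False \<open>0 < \<Delta>\<close> by (simp add: field_simps)
qed

text \<open>Polarization: for \<open>u\<close> the multiple of \<open>A v\<close> with \<open>norm u = norm v\<close>,
  \<open>4 (u \<bullet> A v)\<close> is the difference of the quadratic form at \<open>u + v\<close> and \<open>u - v\<close>.\<close>

lemma onorm_le_of_quadratic_form_le:
  fixes A :: "'a::real_inner \<Rightarrow> 'a"
  assumes "linear A"
    and sym: "\<And>u v. u \<bullet> A v = v \<bullet> A u"
    and quad: "\<And>v. \<bar>v \<bullet> A v\<bar> \<le> c * norm v ^ 2"
    and "0 \<le> c"
  shows "onorm A \<le> c"
proof (rule onorm_bound[OF \<open>0 \<le> c\<close>])
  fix v :: 'a
  show "norm (A v) \<le> c * norm v"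
  proof (cases "A v = 0")
    case True
    then show ?thesis
      using \<open>0 \<le> c\<close> by simp
  next
    case False
    then have "v \<noteq> 0"
      using linear_0[OF \<open>linear A\<close>] by auto
    define u where "u = (norm v / norm (A v)) *\<^sub>R A v"
    have "norm u = norm v"
      using False by (simp add: u_def)
    have "4 * (norm v * norm (A v)) = 4 * (u \<bullet> A v)"
      using False by (simp add: u_def power2_norm_eq_inner[symmetric] power2_eq_square)
    also have "\<dots> = (u + v) \<bullet> A (u + v) - (u - v) \<bullet> A (u - v)"
      using sym[of v u]
      by (simp add: linear_add[OF \<open>linear A\<close>] linear_diff[OF \<open>linear A\<close>]
          inner_add_left inner_add_right inner_diff_left inner_diff_right)
    also have "\<dots> \<le> c * (norm (u + v) ^ 2 + norm (u - v) ^ 2)"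
      using abs_le_D1[OF quad[of "u + v"]] abs_le_D2[OF quad[of "u - v"]]
      by (simp add: distrib_left)
    also have "norm (u + v) ^ 2 + norm (u - v) ^ 2 = 2 * norm u ^ 2 + 2 * norm v ^ 2"
      by (simp add: power2_norm_eq_inner inner_add_left inner_add_right inner_diff_left
          inner_diff_right inner_commute)
    finally have "4 * (norm v * norm (A v)) \<le> 4 * (norm v * (c * norm v))"
      using \<open>norm u = norm v\<close> by (simp add: power2_eq_square algebra_simps)
    then show ?thesis
      using \<open>v \<noteq> 0\<close> by simp
  qed
qed

lemma lipschitz_constant_nonneg:
  fixes L :: real
  assumes "\<And>y z :: 'a::euclidean_space. 0 \<le> L * norm (y - z)"
  shows "0 \<le> L"
proof -
  obtain b :: 'a where "b \<in> Basis"
    using nonempty_Basis by blast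
  then show ?thesis
    using assms[of b 0] by simp
qed

lemma onorm_inner_left_le_norm: "onorm (\<lambda>h. v \<bullet> h) \<le> norm v"
  by (rule onorm_bound) (simp_all add: Cauchy_Schwarz_ineq2)

lemma norm_matrix_vector_mult_le: "norm (A *v v) \<le> mat_opnorm A * norm v"
  unfolding mat_opnorm_def by (rule onorm) simp

lemma mat_opnorm_nonneg: "0 \<le> mat_opnorm A"
  unfolding mat_opnorm_def by (rule onorm_pos_le) simp

lemma mat_opnorm_diff: "mat_opnorm (A - B) = onorm (\<lambda>v. A *v v - B *v v)"
  by (simp add: mat_opnorm_def matrix_vector_mult_diff_rdistrib)

lemma mat_opnorm_triangle: "mat_opnorm (A + B) \<le> mat_opnorm A + mat_opnorm B"
proof -
  have "(*v) (A + B) = (\<lambda>v. A *v v + B *v v)"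
    by (simp add: fun_eq_iff matrix_vector_mult_add_rdistrib)
  then show ?thesis
    by (simp add: mat_opnorm_def onorm_triangle)
qed

lemma inner_symmetric_matrix:
  fixes A :: "real^'n^'n"
  assumes "transpose A = A"
  shows "u \<bullet> (A *v v) = v \<bullet> (A *v u)"
proof -
  have "u \<bullet> (A *v v) = (u v* A) \<bullet> v"
    by (rule dot_lmul_matrix[symmetric])
  also have "\<dots> = (A *v u) \<bullet> v"
    using transpose_matrix_vector[of A u] assms by simp
  finally show ?thesis
    by (simp add: inner_commute)
qed

section \<open>Accuracy of the quadratic model\<close>

lemma qmodel_fit_shift:
  assumes "\<And>y. y \<in> cball x \<Delta> \<Longrightarrow>
      \<bar>qmodel c g H x y - a - p \<bullet> (y - x) - 1/2 * ((y - x) \<bullet> (P *v (y - x)))\<bar> \<le> K"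
    and "norm w \<le> \<Delta>"
  shows "\<bar>(c - a) + (g - p) \<bullet> w + 1/2 * (w \<bullet> ((H - P) *v w))\<bar> \<le> K"
proof -
  have "x + w \<in> cball x \<Delta>"
    using assms(2) by (simp add: dist_norm)
  from assms(1)[OF this] show ?thesis
    by (simp add: qmodel_def inner_diff_left inner_diff_right matrix_vector_mult_diff_rdistrib
        algebra_simps)
qed

lemma qmodel_fit_gradient_error_le:
  assumes "0 < \<Delta>"
    and fit: "\<And>y. y \<in> cball x \<Delta> \<Longrightarrow>
      \<bar>qmodel c g H x y - a - p \<bullet> (y - x) - 1/2 * ((y - x) \<bullet> (P *v (y - x)))\<bar> \<le> K"
  shows "\<Delta> * norm (g - p) \<le> K"
proof (rule norm_linear_part_le_of_ball_bound[OF \<open>0 < \<Delta>\<close>])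
  show "\<bar>(c - a) + (g - p) \<bullet> w + 1/2 * (w \<bullet> ((H - P) *v w))\<bar> \<le> K" if "norm w \<le> \<Delta>" for w
    using qmodel_fit_shift[OF fit that] .
  show "1/2 * (- w \<bullet> ((H - P) *v - w)) = 1/2 * (w \<bullet> ((H - P) *v w))" for w
    by (simp add: vec.neg)
qed

lemma qmodel_fit_hessian_error_le:
  assumes "0 < \<Delta>"
    and sym: "\<And>u v. u \<bullet> ((H - P) *v v) = v \<bullet> ((H - P) *v u)"
    and fit: "\<And>y. y \<in> cball x \<Delta> \<Longrightarrow>
      \<bar>qmodel c g H x y - a - p \<bullet> (y - x) - 1/2 * ((y - x) \<bullet> (P *v (y - x)))\<bar> \<le> K"
  shows "mat_opnorm (H - P) \<le> 4 * K / \<Delta>\<^sup>2"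
  unfolding mat_opnorm_def
proof (rule onorm_le_of_quadratic_form_le[OF _ sym])
  have fit0: "\<bar>(c - a) + (g - p) \<bullet> w + 1/2 * (w \<bullet> ((H - P) *v w))\<bar> \<le> K" if "norm w \<le> \<Delta>" for w
    using qmodel_fit_shift[OF fit that] .
  show "linear ((*v) (H - P))"
    by (simp add: bounded_linear.linear)
  show "\<bar>v \<bullet> ((H - P) *v v)\<bar> \<le> 4 * K / \<Delta>\<^sup>2 * norm v ^ 2" for v
    by (rule quadratic_part_le_of_ball_bound[OF _ \<open>0 < \<Delta>\<close> fit0]) (simp add: bounded_linear.linear)
  show "0 \<le> 4 * K / \<Delta>\<^sup>2"
    using fit0[of 0] \<open>0 < \<Delta>\<close> by simp
qed

context
  fixes f :: "real^'n \<Rightarrow> real" and gradf :: "real^'n \<Rightarrow> real^'n"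
    and x g :: "real^'n" and H :: "real^'n^'n" and c L \<kappa> \<Delta> :: real
  assumes "0 < \<Delta>" and "0 \<le> \<kappa>"
    and f': "\<And>y. (f has_derivative (\<lambda>h. gradf y \<bullet> h)) (at y)"
    and lip: "\<And>y z. norm (gradf y - gradf z) \<le> L * norm (y - z)"
    and fit: "\<And>y. y \<in> cball x \<Delta> \<Longrightarrow> \<bar>qmodel c g H x y - f x - gradf x \<bullet> (y - x)\<bar> \<le> \<kappa> * \<Delta>\<^sup>2"
begin

lemma gradient_lipschitz_nonneg: "0 \<le> L"
  by (rule lipschitz_constant_nonneg, rule order_trans[OF norm_ge_zero lip])

lemma fully_linear_value_error:
  assumes "y \<in> cball x \<Delta>"
  shows "\<bar>qmodel c g H x y - f y\<bar> \<le> (\<kappa> + L / 2) * \<Delta>\<^sup>2"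
proof -
  have lip': "onorm (\<lambda>h. gradf y \<bullet> h - gradf z \<bullet> h) \<le> L * norm (y - z)" for y z
    using onorm_inner_left_le_norm[of "gradf y - gradf z"] lip[of y z] by (simp add: inner_diff_left)
  have "\<bar>f y - f x - gradf x \<bullet> (y - x)\<bar> \<le> L / 2 * norm (y - x) ^ 2"
    using taylor_remainder_le_lipschitz_derivative[OF f' lip' gradient_lipschitz_nonneg, of x "y - x"]
    by simp
  also have "\<dots> \<le> L / 2 * \<Delta>\<^sup>2"
    using gradient_lipschitz_nonneg assms
    by (intro mult_left_mono power_mono) (auto simp: dist_norm norm_minus_commute)
  finally have "\<bar>f y - f x - gradf x \<bullet> (y - x)\<bar> \<le> L / 2 * \<Delta>\<^sup>2" .
  then show ?thesis
    using fit[OF assms] abs_triangle_ineq4[of "qmodel c g H x y - f x - gradf x \<bullet> (y - x)"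
        "f y - f x - gradf x \<bullet> (y - x)"]
    by (simp add: distrib_right)
qed

lemma fully_linear_gradient_error:
  assumes "mat_opnorm H \<le> \<kappa>H" and "y \<in> cball x \<Delta>"
  shows "norm (qmodel_grad g H x y - gradf y) \<le> (2 * \<kappa> + L + 2 * \<kappa>H) * \<Delta>"
proof -
  have "norm (y - x) \<le> \<Delta>"
    using assms(2) by (simp add: dist_norm norm_minus_commute)
  have "\<Delta> * norm (g - gradf x) \<le> \<kappa> * \<Delta>\<^sup>2"
    by (rule qmodel_fit_gradient_error_le[where P=0 and x=x and c=c and H=H and a="f x",
          OF \<open>0 < \<Delta>\<close>]) (simp add: fit)
  then have "norm (g - gradf x) \<le> \<kappa> * \<Delta>"
    using \<open>0 < \<Delta>\<close> by (simp add: power2_eq_square)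
  moreover have "norm (H *v (y - x)) \<le> \<kappa>H * \<Delta>"
  proof -
    have "norm (H *v (y - x)) \<le> mat_opnorm H * norm (y - x)"
      by (rule norm_matrix_vector_mult_le)
    also have "\<dots> \<le> \<kappa>H * \<Delta>"
      using mat_opnorm_nonneg[of H] assms(1) \<open>norm (y - x) \<le> \<Delta>\<close> by (intro mult_mono) auto
    finally show ?thesis .
  qed
  moreover have "norm (gradf x - gradf y) \<le> L * \<Delta>"
    using lip[of x y] mult_left_mono[OF \<open>norm (y - x) \<le> \<Delta>\<close> gradient_lipschitz_nonneg]
    by (simp add: norm_minus_commute)
  moreover have "qmodel_grad g H x y - gradf y = (g - gradf x) + H *v (y - x) + (gradf x - gradf y)"
    by (simp add: qmodel_grad_def)
  ultimately have "norm (qmodel_grad g H x y - gradf y) \<le> \<kappa> * \<Delta> + \<kappa>H * \<Delta> + L * \<Delta>"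
    by (simp only:) (intro norm_triangle_le add_mono)
  also have "\<dots> \<le> (2 * \<kappa> + L + 2 * \<kappa>H) * \<Delta>"
    using \<open>0 \<le> \<kappa>\<close> \<open>0 < \<Delta>\<close> mat_opnorm_nonneg[of H] assms(1) by (simp add: algebra_simps)
  finally show ?thesis .
qed

end

context
  fixes f :: "real^'n \<Rightarrow> real" and gradf :: "real^'n \<Rightarrow> real^'n"
    and hessf :: "real^'n \<Rightarrow> real^'n^'n"
    and x g :: "real^'n" and H :: "real^'n^'n" and c L \<kappa> \<Delta> :: real
  assumes "transpose H = H" and "0 < \<Delta>" and "0 \<le> \<kappa>"
    and f': "\<And>y. (f has_derivative (\<lambda>h. gradf y \<bullet> h)) (at y)"
    and gradf': "\<And>y. (gradf has_derivative (\<lambda>h. hessf y *v h)) (at y)"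
    and lip: "\<And>y z. mat_opnorm (hessf y - hessf z) \<le> L * norm (y - z)"
    and fit: "\<And>y. y \<in> cball x \<Delta> \<Longrightarrow> \<bar>qmodel c g H x y - f x - gradf x \<bullet> (y - x)
                      - 1/2 * ((y - x) \<bullet> (hessf x *v (y - x)))\<bar> \<le> \<kappa> * \<Delta> ^ 3"
begin

lemma hessian_lipschitz_onorm: "onorm (\<lambda>h. hessf y *v h - hessf z *v h) \<le> L * norm (y - z)"
  using lip by (simp add: mat_opnorm_diff)

lemma hessian_lipschitz_nonneg: "0 \<le> L"
  by (rule lipschitz_constant_nonneg, rule order_trans[OF mat_opnorm_nonneg lip])

lemma fully_quadratic_value_error:
  assumes "y \<in> cball x \<Delta>"
  shows "\<bar>qmodel c g H x y - f y\<bar> \<le> (\<kappa> + L / 6) * \<Delta> ^ 3"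
proof -
  let ?T = "\<lambda>z. z - f x - gradf x \<bullet> (y - x) - 1/2 * ((y - x) \<bullet> (hessf x *v (y - x)))"
  have "\<bar>?T (f y)\<bar> \<le> L / 6 * norm (y - x) ^ 3"
    using taylor2_remainder_le_lipschitz_hessian[OF f' gradf' hessian_lipschitz_onorm
        hessian_lipschitz_nonneg, of x "y - x"]
    by simp
  also have "\<dots> \<le> L / 6 * \<Delta> ^ 3"
    using hessian_lipschitz_nonneg assms
    by (intro mult_left_mono power_mono) (auto simp: dist_norm norm_minus_commute)
  finally have "\<bar>?T (f y)\<bar> \<le> L / 6 * \<Delta> ^ 3" .
  then show ?thesis
    using fit[OF assms] abs_triangle_ineq4[of "?T (qmodel c g H x y)" "?T (f y)"]
    by (simp add: distrib_right)
qed

lemma hessian_error_at_center: "mat_opnorm (H - hessf x) \<le> 4 * \<kappa> * \<Delta>"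
proof -
  have "u \<bullet> ((H - hessf x) *v v) = v \<bullet> ((H - hessf x) *v u)" for u v
    using inner_symmetric_matrix[OF \<open>transpose H = H\<close>, of u v]
      second_derivative_symmetric[OF f' gradf' hessian_lipschitz_onorm hessian_lipschitz_nonneg,
        of u x v]
    by (simp add: matrix_vector_mult_diff_rdistrib inner_diff_right)
  from qmodel_fit_hessian_error_le[OF \<open>0 < \<Delta>\<close> this fit]
  show ?thesis
    using \<open>0 < \<Delta>\<close> by (simp add: power2_eq_square power3_eq_cube)
qed

lemma fully_quadratic_hessian_error:
  assumes "y \<in> cball x \<Delta>"
  shows "mat_opnorm (H - hessf y) \<le> (24 * \<kappa> + L) * \<Delta>"
proof -
  have "mat_opnorm (H - hessf y) \<le> mat_opnorm (H - hessf x) + mat_opnorm (hessf x - hessf y)"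
    using mat_opnorm_triangle[of "H - hessf x" "hessf x - hessf y"] by simp
  also have "\<dots> \<le> 4 * \<kappa> * \<Delta> + L * \<Delta>"
  proof (rule add_mono[OF hessian_error_at_center])
    have "norm (x - y) \<le> \<Delta>"
      using assms by (simp add: dist_norm)
    then show "mat_opnorm (hessf x - hessf y) \<le> L * \<Delta>"
      using lip[of x y] mult_left_mono[OF _ hessian_lipschitz_nonneg] by fastforce
  qed
  also have "\<dots> \<le> (24 * \<kappa> + L) * \<Delta>"
    using \<open>0 \<le> \<kappa>\<close> \<open>0 < \<Delta>\<close> by (simp add: algebra_simps)
  finally show ?thesis .
qed

lemma fully_quadratic_gradient_error:
  assumes "y \<in> cball x \<Delta>"
  shows "norm (qmodel_grad g H x y - gradf y) \<le> (34 * \<kappa> + L / 2) * \<Delta>\<^sup>2"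
proof -
  have "norm (y - x) \<le> \<Delta>"
    using assms by (simp add: dist_norm norm_minus_commute)
  have "\<Delta> * norm (g - gradf x) \<le> \<kappa> * \<Delta> ^ 3"
    by (rule qmodel_fit_gradient_error_le[OF \<open>0 < \<Delta>\<close> fit])
  then have "norm (g - gradf x) \<le> \<kappa> * \<Delta>\<^sup>2"
    using \<open>0 < \<Delta>\<close> by (simp add: power2_eq_square power3_eq_cube)
  moreover have "norm ((H - hessf x) *v (y - x)) \<le> 4 * \<kappa> * \<Delta>\<^sup>2"
  proof -
    have "norm ((H - hessf x) *v (y - x)) \<le> mat_opnorm (H - hessf x) * norm (y - x)"
      by (rule norm_matrix_vector_mult_le)
    also have "\<dots> \<le> (4 * \<kappa> * \<Delta>) * \<Delta>"
      using hessian_error_at_center \<open>norm (y - x) \<le> \<Delta>\<close> \<open>0 \<le> \<kappa>\<close> \<open>0 < \<Delta>\<close>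
      by (intro mult_mono) auto
    finally show ?thesis
      by (simp add: power2_eq_square)
  qed
  moreover have "norm (gradf y - gradf x - hessf x *v (y - x)) \<le> L / 2 * \<Delta>\<^sup>2"
  proof -
    have "norm (gradf y - gradf x - hessf x *v (y - x)) \<le> L / 2 * norm (y - x) ^ 2"
      using taylor_remainder_le_lipschitz_derivative[OF gradf' hessian_lipschitz_onorm
          hessian_lipschitz_nonneg, of x "y - x"]
      by simp
    also have "\<dots> \<le> L / 2 * \<Delta>\<^sup>2"
      using hessian_lipschitz_nonneg \<open>norm (y - x) \<le> \<Delta>\<close> by (intro mult_left_mono power_mono) auto
    finally show ?thesis .
  qed
  moreover have "qmodel_grad g H x y - gradf y
      = (g - gradf x) + (H - hessf x) *v (y - x) - (gradf y - gradf x - hessf x *v (y - x))"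
    by (simp add: qmodel_grad_def matrix_vector_mult_diff_rdistrib)
  ultimately have "norm (qmodel_grad g H x y - gradf y)
      \<le> \<kappa> * \<Delta>\<^sup>2 + 4 * \<kappa> * \<Delta>\<^sup>2 + L / 2 * \<Delta>\<^sup>2"
    by (simp only:) (rule order_trans[OF norm_triangle_ineq4], intro add_mono norm_triangle_le)
  also have "\<dots> \<le> (34 * \<kappa> + L / 2) * \<Delta>\<^sup>2"
    using \<open>0 \<le> \<kappa>\<close> by (simp add: algebra_simps)
  finally show ?thesis .
qed

end

theorem lemma5p1:
  fixes x g :: "real^'n" and c \<Delta> :: real and H :: "real^'n^'n"
  assumes symH: "transpose H = H"
    and Dpos: "\<Delta> > 0"
  shows
   "(\<forall>(f :: real^'n \<Rightarrow> real) (gradf :: real^'n \<Rightarrow> real^'n) Lg \<kappa>.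
       bdd_below (range f)
     \<and> (\<forall>y. (f has_derivative (\<lambda>h. gradf y \<bullet> h)) (at y))
     \<and> continuous_on UNIV gradf
     \<and> (\<forall>y z. norm (gradf y - gradf z) \<le> Lg * norm (y - z))
     \<and> \<kappa> > 0
     \<and> (\<forall>y\<in>cball x \<Delta>. \<bar>qmodel c g H x y - f x - gradf x \<bullet> (y - x)\<bar> \<le> \<kappa> * \<Delta>^2)
     \<longrightarrow> (\<forall>\<kappa>H. \<kappa>H \<ge> mat_opnorm H \<longrightarrow>
           (\<forall>y\<in>cball x \<Delta>.
              \<bar>qmodel c g H x y - f y\<bar> \<le> (\<kappa> + Lg / 2) * \<Delta>^2
            \<and> norm (qmodel_grad g H x y - gradf y) \<le> (2*\<kappa> + Lg + 2*\<kappa>H) * \<Delta>)))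
  \<and> (\<forall>(f :: real^'n \<Rightarrow> real) (gradf :: real^'n \<Rightarrow> real^'n) (hessf :: real^'n \<Rightarrow> real^'n^'n) Lh \<kappa>.
       bdd_below (range f)
     \<and> (\<forall>y. (f has_derivative (\<lambda>h. gradf y \<bullet> h)) (at y))
     \<and> (\<forall>y. (gradf has_derivative (\<lambda>h. hessf y *v h)) (at y))
     \<and> continuous_on UNIV hessf
     \<and> (\<forall>y z. mat_opnorm (hessf y - hessf z) \<le> Lh * norm (y - z))
     \<and> \<kappa> > 0
     \<and> (\<forall>y\<in>cball x \<Delta>. \<bar>qmodel c g H x y - f x - gradf x \<bullet> (y - x)
                          - (1/2) * ((y - x) \<bullet> (hessf x *v (y - x)))\<bar> \<le> \<kappa> * \<Delta>^3)
     \<longrightarrow> (\<forall>y\<in>cball x \<Delta>.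
              \<bar>qmodel c g H x y - f y\<bar> \<le> (\<kappa> + Lh / 6) * \<Delta>^3
            \<and> norm (qmodel_grad g H x y - gradf y) \<le> (34*\<kappa> + Lh / 2) * \<Delta>^2
            \<and> mat_opnorm (H - hessf y) \<le> (24*\<kappa> + Lh) * \<Delta>))"
  by (intro conjI allI impI ballI; elim conjE;
      rule fully_linear_value_error fully_linear_gradient_error fully_quadratic_value_error
        fully_quadratic_gradient_error fully_quadratic_hessian_error;
      use symH Dpos in auto)

end
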